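(* Let $\mathcal H$ and $\mathcal K$ be complex Hilbert spaces and $k \in \mathbb N$ with $k < \dim \mathcal H$. Let $\phi \colon \mathcal F_s(\mathcal H) \to \mathcal F_s(\mathcal K)$ be a linear map such that $\phi(\mathcal P_k(\mathcal H)) \subset \mathcal P_f(\mathcal K)$. Then there exists $m \in \mathbb N \cup \{0\}$ with $m \le \dim \mathcal K$ such that $\phi(\mathcal P_k(\mathcal H)) \subset \mathcal P_m(\mathcal K)$.
   Context: For a complex Hilbert space $\mathcal H$, $\mathcal F_s(\mathcal H)$ is the real vector space of bounded self-adjoint finite-rank operators on $\mathcal H$. A projection is a self-adjoint idempotent bounded operator; $\mathcal P_k(\mathcal H)$ is the set of projections of rank $k$ and $\mathcal P_f(\mathcal H)$ the set of all finite-rank projections. *)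

theory Defs
  imports "HOL-Analysis.Analysis"
begin

text \<open>The inner product is linear in the second and conjugate-linear in the
  first argument; the norm is the one induced by the inner product.\<close>

class complex_inner = real_normed_vector +
  fixes scaleC :: "complex \<Rightarrow> 'a \<Rightarrow> 'a"  (infixr \<open>*\<^sub>C\<close> 75)
  fixes cinner :: "'a \<Rightarrow> 'a \<Rightarrow> complex"
  assumes scaleC_add_right: "c *\<^sub>C (x + y) = c *\<^sub>C x + c *\<^sub>C y"
    and scaleC_add_left: "(c + d) *\<^sub>C x = c *\<^sub>C x + d *\<^sub>C x"
    and scaleC_scaleC: "c *\<^sub>C (d *\<^sub>C x) = (c * d) *\<^sub>C x"
    and scaleC_one: "1 *\<^sub>C x = x"
    and scaleC_of_real: "complex_of_real r *\<^sub>C x = r *\<^sub>R x"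
    and cinner_commute: "cinner x y = cnj (cinner y x)"
    and cinner_add_right: "cinner x (y + z) = cinner x y + cinner x z"
    and cinner_scaleC_right: "cinner x (c *\<^sub>C y) = c * cinner x y"
    and cinner_pos: "Im (cinner x x) = 0 \<and> Re (cinner x x) \<ge> 0"
    and cinner_eq_zero: "cinner x x = 0 \<longleftrightarrow> x = 0"
    and norm_cinner: "norm x = sqrt (Re (cinner x x))"

class chilbert_space = complex_inner + complete_space

abbreviation cspan :: "'a::complex_inner set \<Rightarrow> 'a set"
  where "cspan \<equiv> module.span scaleC"

abbreviation cdependent :: "'a::complex_inner set \<Rightarrow> bool"
  where "cdependent \<equiv> module.dependent scaleC"

text \<open>Dimension comparisons, valid also for infinite-dimensional spaces\<close>

text \<open>"n < dim H": H contains n+1 complex-linearly independent vectors.\<close>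
definition dim_greater :: "'a::complex_inner itself \<Rightarrow> nat \<Rightarrow> bool"
  where "dim_greater _ n \<longleftrightarrow>
     (\<exists>B::'a set. finite B \<and> card B = Suc n \<and> \<not> cdependent B)"

text \<open>"n \<le> dim H": H contains n complex-linearly independent vectors.\<close>
definition dim_at_least :: "'a::complex_inner itself \<Rightarrow> nat \<Rightarrow> bool"
  where "dim_at_least _ n \<longleftrightarrow>
     (\<exists>B::'a set. finite B \<and> card B = n \<and> \<not> cdependent B)"

definition bounded_clinear :: "('a::complex_inner \<Rightarrow> 'b::complex_inner) \<Rightarrow> bool"
  where "bounded_clinear A \<longleftrightarrow>
     (\<forall>x y. A (x + y) = A x + A y) \<and> (\<forall>c x. A (c *\<^sub>C x) = c *\<^sub>C A x) \<and>
     (\<exists>K. \<forall>x. norm (A x) \<le> norm x * K)"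

definition selfadjoint :: "('a::complex_inner \<Rightarrow> 'a) \<Rightarrow> bool"
  where "selfadjoint A \<longleftrightarrow> (\<forall>x y. cinner (A x) y = cinner x (A y))"

definition finite_rank :: "('a::complex_inner \<Rightarrow> 'a) \<Rightarrow> bool"
  where "finite_rank A \<longleftrightarrow> (\<exists>B. finite B \<and> cspan B = range A)"

definition has_rank :: "('a::complex_inner \<Rightarrow> 'a) \<Rightarrow> nat \<Rightarrow> bool"
  where "has_rank A k \<longleftrightarrow>
     (\<exists>B. finite B \<and> card B = k \<and> \<not> cdependent B \<and> cspan B = range A)"

definition Fs :: "('a::complex_inner \<Rightarrow> 'a) set"
  where "Fs = {A. bounded_clinear A \<and> selfadjoint A \<and> finite_rank A}"

definition is_projection :: "('a::complex_inner \<Rightarrow> 'a) \<Rightarrow> bool"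
  where "is_projection P \<longleftrightarrow> bounded_clinear P \<and> selfadjoint P \<and> P \<circ> P = P"

definition Pk :: "nat \<Rightarrow> ('a::complex_inner \<Rightarrow> 'a) set"
  where "Pk k = {P. is_projection P \<and> has_rank P k}"

definition Pf :: "('a::complex_inner \<Rightarrow> 'a) set"
  where "Pf = {P. is_projection P \<and> finite_rank P}"

text \<open>Real-linear maps F_s(H) \<rightarrow> F_s(K) (F_s is a real vector space under pointwise
  operations).\<close>
definition Fs_linear_map ::
    "(('a::complex_inner \<Rightarrow> 'a) \<Rightarrow> ('b::complex_inner \<Rightarrow> 'b)) \<Rightarrow> bool"
  where "Fs_linear_map \<phi> \<longleftrightarrow>
     \<phi> ` Fs \<subseteq> Fs \<and>
     (\<forall>A\<in>Fs. \<forall>B\<in>Fs. \<phi> (\<lambda>x. A x + B x) = (\<lambda>y. \<phi> A y + \<phi> B y)) \<and>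
     (\<forall>A\<in>Fs. \<forall>r::real. \<phi> (\<lambda>x. r *\<^sub>R A x) = (\<lambda>y. r *\<^sub>R \<phi> A y))"

end

theory Submission
  imports Defs
begin

text \<open>
  If a rank-k projection \<open>R + |w\<rangle>\<langle>w|\<close>, with w a unit vector orthogonal to the range
  of R, is rotated into \<open>R + |e\<rangle>\<langle>e|\<close>, the intermediate projections
  \<open>R + |u\<^sub>t\<rangle>\<langle>u\<^sub>t|\<close>, with \<open>u\<^sub>t\<close> the normalisation of \<open>(1 - t) w + t e\<close>, are real
  combinations of the four fixed operators \<open>R\<close>, \<open>|w\<rangle>\<langle>w|\<close>, \<open>|e\<rangle>\<langle>e|\<close>,
  \<open>|w + e\<rangle>\<langle>w + e|\<close> with continuous coefficients. By linearity their images under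
  \<open>\<phi>\<close> form a continuous path of finite-rank projections, and the rank of a projection is
  locally constant: \<open>\<parallel>P x - Q x\<parallel> < \<parallel>x\<parallel>\<close> for all \<open>x \<noteq> 0\<close> forces equal ranks.
  Any two rank-k projections are joined by finitely many such rotations, because each
  rotation can be chosen to enlarge the intersection of the range with the target range.
\<close>

interpretation cvs: vector_space "scaleC :: complex \<Rightarrow> 'a::complex_inner \<Rightarrow> 'a"
  by unfold_locales (simp_all add: scaleC_add_right scaleC_add_left scaleC_scaleC scaleC_one)

abbreviation cdim :: "'a::complex_inner set \<Rightarrow> nat"
  where "cdim \<equiv> vector_space.dim scaleC"

abbreviation crank :: "('a::complex_inner \<Rightarrow> 'a) \<Rightarrow> nat"
  where "crank A \<equiv> cdim (range A)"

lemma scaleR_scaleC: "r *\<^sub>R x = complex_of_real r *\<^sub>C x"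
  by (simp add: scaleC_of_real)

lemma cinner_add_left: "cinner (x + y) z = cinner x z + cinner y z"
  by (metis cinner_commute cinner_add_right complex_cnj_add)

lemma cinner_scaleC_left: "cinner (c *\<^sub>C x) y = cnj c * cinner x y"
  by (metis cinner_commute cinner_scaleC_right complex_cnj_mult)

lemma cinner_scaleR_right: "cinner x (r *\<^sub>R y) = complex_of_real r * cinner x y"
  by (simp add: scaleR_scaleC cinner_scaleC_right)

lemma cinner_scaleR_left: "cinner (r *\<^sub>R x) y = complex_of_real r * cinner x y"
  by (simp add: scaleR_scaleC cinner_scaleC_left)

lemma cinner_zero_left [simp]: "cinner 0 x = 0"
  using cinner_add_left[of 0 0 x] by simp

lemma cinner_diff_right: "cinner x (y - z) = cinner x y - cinner x z"
  by (metis add_diff_cancel cinner_add_right diff_add_cancel)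

lemma cinner_diff_left: "cinner (x - y) z = cinner x z - cinner y z"
  by (metis add_diff_cancel cinner_add_left diff_add_cancel)

lemma cinner_self: "cinner x x = complex_of_real ((norm x)\<^sup>2)"
  using cinner_pos[of x] by (simp add: norm_cinner complex_eq_iff)

lemma cinner_eq_imp_eq: "(\<And>z. cinner z a = cinner z b) \<Longrightarrow> a = b"
  by (metis cinner_diff_right cinner_eq_zero right_minus_eq)

lemma norm_eq_one_iff_cinner: "norm u = 1 \<longleftrightarrow> cinner u u = 1"
  unfolding cinner_self of_real_eq_1_iff using power2_eq_iff_nonneg[of "norm u" 1] by simp

lemma pythagoras:
  assumes "cinner x y = 0"
  shows "(norm (x + y))\<^sup>2 = (norm x)\<^sup>2 + (norm y)\<^sup>2"
proof -
  have "cinner y x = 0" using assms cinner_commute[of y x] by simp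
  then have "cinner (x + y) (x + y) = cinner x x + cinner y y"
    using assms by (simp add: cinner_add_left cinner_add_right)
  then show ?thesis by (metis cinner_self of_real_add of_real_eq_iff)
qed

lemma cinner_normalize_self:
  assumes "v \<noteq> 0"
  shows "cinner (v /\<^sub>R norm v) (v /\<^sub>R norm v) = 1"
  using assms by (simp add: norm_eq_one_iff_cinner[symmetric])

section \<open>Orthogonal projections\<close>

abbreviation clinear :: "('a::complex_inner \<Rightarrow> 'b::complex_inner) \<Rightarrow> bool"
  where "clinear \<equiv> module_hom scaleC scaleC"

lemma clinear_iff:
  "clinear A \<longleftrightarrow> (\<forall>x y. A (x + y) = A x + A y) \<and> (\<forall>c x. A (c *\<^sub>C x) = c *\<^sub>C A x)"
  by (simp add: module_hom_iff cvs.module_axioms)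

lemma bounded_clinear_imp_clinear: "bounded_clinear A \<Longrightarrow> clinear A"
  by (simp add: bounded_clinear_def clinear_iff)

lemma clinear_scaleR: "clinear A \<Longrightarrow> A (r *\<^sub>R x) = r *\<^sub>R A x"
  by (simp add: scaleR_scaleC module_hom.scale)

lemma clinear_subspace_range: "clinear A \<Longrightarrow> cvs.subspace (range A)"
  using module_hom.subspace_image[of scaleC scaleC A UNIV] by simp

definition ketbra :: "'a::complex_inner \<Rightarrow> 'a \<Rightarrow> 'a"
  where "ketbra y x = cinner y x *\<^sub>C y"

lemma clinear_ketbra: "clinear (ketbra y)"
  by (simp add: clinear_iff ketbra_def cinner_add_right cinner_scaleC_right scaleC_add_left
      scaleC_scaleC)

lemma selfadjoint_ketbra: "selfadjoint (ketbra y)"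
  unfolding selfadjoint_def ketbra_def
  by (metis cinner_commute cinner_scaleC_left cinner_scaleC_right mult.commute)

lemma range_ketbra_subset: "range (ketbra y) \<subseteq> cspan {y}"
  by (auto simp: ketbra_def intro: cvs.span_scale cvs.span_base)

lemma idempotent_selfadjoint_norm_le:
  assumes "clinear P" "selfadjoint P" "\<And>x. P (P x) = P x"
  shows "norm (P x) \<le> norm x"
proof -
  have "cinner (P x) (x - P x) = 0"
    using assms by (simp add: module_hom.diff cinner_diff_right selfadjoint_def)
  then have "(norm (P x + (x - P x)))\<^sup>2 = (norm (P x))\<^sup>2 + (norm (x - P x))\<^sup>2"
    by (rule pythagoras)
  then have "(norm (P x))\<^sup>2 \<le> (norm x)\<^sup>2"
    by simp
  then show ?thesis
    by (simp add: power2_le_iff_abs_le)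
qed

lemma is_projection_iff:
  "is_projection P \<longleftrightarrow> clinear P \<and> selfadjoint P \<and> (\<forall>x. P (P x) = P x)"
proof
  assume "is_projection P"
  then show "clinear P \<and> selfadjoint P \<and> (\<forall>x. P (P x) = P x)"
    unfolding is_projection_def by (auto simp: bounded_clinear_imp_clinear dest: fun_cong)
next
  assume P: "clinear P \<and> selfadjoint P \<and> (\<forall>x. P (P x) = P x)"
  then have "norm (P x) \<le> norm x * 1" for x
    using idempotent_selfadjoint_norm_le by auto
  with P show "is_projection P"
    unfolding is_projection_def bounded_clinear_def clinear_iff
    by (auto simp: fun_eq_iff intro!: exI[of _ 1])
qed

lemma
  assumes "is_projection P"
  shows projection_clinear: "clinear P"
    and projection_idem [simp]: "P (P x) = P x"
    and projection_cinner: "cinner (P x) y = cinner x (P y)"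
  using assms by (auto simp: is_projection_iff selfadjoint_def)

lemma norm_projection_le: "is_projection P \<Longrightarrow> norm (P x) \<le> norm x"
  by (simp add: is_projection_iff idempotent_selfadjoint_norm_le selfadjoint_def)

lemma projection_fixes_range: "is_projection P \<Longrightarrow> x \<in> range P \<longleftrightarrow> P x = x"
  by (metis projection_idem rangeE rangeI)

lemma projection_pythagoras:
  assumes "is_projection P"
  shows "(norm x)\<^sup>2 = (norm (P x))\<^sup>2 + (norm (x - P x))\<^sup>2"
proof -
  have "cinner (P x) (x - P x) = 0"
    using assms by (simp add: cinner_diff_right projection_cinner[symmetric])
  then show ?thesis
    using pythagoras by fastforce
qed

lemma projection_eq_if_range_eq:
  assumes P: "is_projection P" and Q: "is_projection Q" and "range P = range Q"
  shows "P = Q"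
proof
  fix x
  show "P x = Q x"
  proof (rule cinner_eq_imp_eq)
    fix z
    have QP: "Q (P x) = P x" and PQ: "P (Q z) = Q z"
      using assms projection_fixes_range by blast+
    have "cinner z (P x) = cinner (Q z) (P x)"
      using projection_cinner[OF Q, of z "P x"] QP by simp
    also have "\<dots> = cinner (Q z) x"
      using projection_cinner[OF P, of "Q z" x] PQ by simp
    also have "\<dots> = cinner z (Q x)"
      by (rule projection_cinner[OF Q])
    finally show "cinner z (P x) = cinner z (Q x)" .
  qed
qed

lemma projection_add_ketbra:
  assumes P: "is_projection P" and e: "cinner e e = 1" "P e = 0"
  shows "is_projection (\<lambda>x. P x + ketbra e x)"
    and "range (\<lambda>x. P x + ketbra e x) = cspan (insert e (range P))"
proof -
  have lin: "clinear P" using P by (rule projection_clinear)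
  have eP: "cinner e (P x) = 0" for x
    using projection_cinner[OF P, of e x] e by simp
  have fix_span: "P y + ketbra e y = y" if y: "y \<in> cspan (insert e (range P))" for y
  proof -
    obtain c where "y - c *\<^sub>C e \<in> cspan (range P)"
      using y by (auto simp: cvs.span_insert)
    moreover have "cspan (range P) = range P"
      using clinear_subspace_range[OF lin] by (rule cvs.span_eq_iff[THEN iffD2])
    ultimately obtain z where "y - c *\<^sub>C e = P z"
      by auto
    then have y: "y = P z + c *\<^sub>C e"
      by (simp add: diff_eq_eq)
    show ?thesis
      using e by (simp add: y ketbra_def module_hom.add[OF lin] module_hom.scale[OF lin]
          cinner_add_right cinner_scaleC_right eP P)
  qed
  have "P x + ketbra e x \<in> cspan (insert e (range P))" for x
    unfolding ketbra_def by (intro cvs.span_add cvs.span_scale cvs.span_base) auto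
  then have range_sub: "range (\<lambda>x. P x + ketbra e x) \<subseteq> cspan (insert e (range P))"
    by blast
  have "clinear (\<lambda>x. P x + ketbra e x)"
    using lin clinear_ketbra[of e] by (simp add: clinear_iff scaleC_add_right)
  moreover have "selfadjoint (\<lambda>x. P x + ketbra e x)"
    using P selfadjoint_ketbra[of e]
    by (simp add: selfadjoint_def cinner_add_left cinner_add_right projection_cinner)
  moreover have "P (P x + ketbra e x) + ketbra e (P x + ketbra e x) = P x + ketbra e x" for x
    using range_sub by (intro fix_span) blast
  ultimately show "is_projection (\<lambda>x. P x + ketbra e x)"
    by (simp add: is_projection_iff)
  show "range (\<lambda>x. P x + ketbra e x) = cspan (insert e (range P))"
  proof
    show "cspan (insert e (range P)) \<subseteq> range (\<lambda>x. P x + ketbra e x)"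
    proof
      fix y
      assume "y \<in> cspan (insert e (range P))"
      then have "y = P y + ketbra e y"
        using fix_span by simp
      then show "y \<in> range (\<lambda>x. P x + ketbra e x)"
        by (rule range_eqI)
    qed
  qed (rule range_sub)
qed

lemma projection_minus_ketbra:
  assumes P: "is_projection P" and w: "cinner w w = 1" "P w = w"
  shows "is_projection (\<lambda>x. P x - ketbra w x)"
    and "P w - ketbra w w = 0"
    and "range (\<lambda>x. P x - ketbra w x) \<subseteq> range P"
proof -
  have lin: "clinear P" using P by (rule projection_clinear)
  have wP: "cinner w (P x) = cinner w x" for x
    using projection_cinner[OF P, of w x] w by simp
  have P_fixes: "P (P x - ketbra w x) = P x - ketbra w x" for x
    using w by (simp add: ketbra_def module_hom.diff[OF lin] module_hom.scale[OF lin] P)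
  have "clinear (\<lambda>x. P x - ketbra w x)"
    using lin clinear_ketbra[of w] by (simp add: clinear_iff cvs.scale_right_diff_distrib)
  moreover have "selfadjoint (\<lambda>x. P x - ketbra w x)"
    using P selfadjoint_ketbra[of w]
    by (simp add: selfadjoint_def cinner_diff_left cinner_diff_right projection_cinner)
  moreover have "ketbra w (P x - ketbra w x) = 0" for x
    using w by (simp add: ketbra_def cinner_diff_right cinner_scaleC_right wP)
  ultimately show "is_projection (\<lambda>x. P x - ketbra w x)"
    by (simp add: is_projection_iff P_fixes)
  show "P w - ketbra w w = 0"
    using w by (simp add: ketbra_def)
  show "range (\<lambda>x. P x - ketbra w x) \<subseteq> range P"
    by (rule image_subsetI, rule range_eqI[of _ P, OF P_fixes[symmetric]])
qed

lemma span_insert_notin_subspace: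
  assumes "cvs.subspace S" "T \<subseteq> S" "v \<in> cspan (insert e T)" "v \<notin> S"
  shows "e \<notin> S"
  using assms cvs.span_minimal[of "insert e T" S] by blast

definition cfinite_dim :: "'a::complex_inner set \<Rightarrow> bool"
  where "cfinite_dim S \<longleftrightarrow> (\<exists>F. finite F \<and> S \<subseteq> cspan F)"

lemma cfinite_dim_subset: "cfinite_dim T \<Longrightarrow> S \<subseteq> T \<Longrightarrow> cfinite_dim S"
  unfolding cfinite_dim_def by blast

lemma cfinite_dim_basis:
  assumes "cvs.subspace S" "cfinite_dim S"
  obtains B where "finite B" "\<not> cdependent B" "cspan B = S" "card B = cdim S"
proof -
  obtain F where F: "finite F" "S \<subseteq> cspan F"
    using assms(2) by (auto simp: cfinite_dim_def)
  obtain B where B: "B \<subseteq> S" "\<not> cdependent B" "S \<subseteq> cspan B" "card B = cdim S"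
    using cvs.basis_exists[of S] by blast
  have "finite B"
    using cvs.independent_span_bound[OF F(1) B(2)] B(1) F(2) by blast
  moreover have "cspan B = S"
    using B(1,3) cvs.span_minimal[OF B(1) assms(1)] by blast
  ultimately show ?thesis
    using that B by blast
qed

lemma cdim_subset:
  assumes "S \<subseteq> T" "cvs.subspace T" "cfinite_dim T"
  shows "cdim S \<le> cdim T"
proof -
  obtain C where "finite C" "cspan C = T" "card C = cdim T"
    using cfinite_dim_basis[OF assms(2,3)] by metis
  then show ?thesis
    using assms(1) cvs.dim_le_card[of S C] by simp
qed

lemma cdim_span_insert:
  assumes "cvs.subspace S" "cfinite_dim S" "e \<notin> S"
  shows "cdim (cspan (insert e S)) = Suc (cdim S)"
proof -
  obtain B where B: "finite B" "\<not> cdependent B" "cspan B = S" "card B = cdim S"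
    using cfinite_dim_basis[OF assms(1,2)] by blast
  have "B \<subseteq> S"
    using B(3) cvs.span_superset[of B] by blast
  with assms(3) have "e \<notin> B"
    by blast
  have "\<not> cdependent (insert e B)"
    using B assms(3) by (intro cvs.independent_insertI) auto
  moreover have "cspan (insert e B) = cspan (insert e S)"
    using B(3) by (metis cvs.span_insert cvs.span_span)
  ultimately have "cdim (cspan (insert e S)) = card (insert e B)"
    using cvs.dim_span_eq_card_independent by metis
  then show ?thesis
    using B(1,4) \<open>e \<notin> B\<close> by simp
qed

lemma cdim_psubset:
  assumes "S \<subset> T" "cvs.subspace S" "cvs.subspace T" "cfinite_dim T"
  shows "cdim S < cdim T"
proof -
  obtain t where t: "t \<in> T" "t \<notin> S"
    using assms(1) by blast
  have "cdim (cspan (insert t S)) = Suc (cdim S)"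
    using cdim_span_insert assms cfinite_dim_subset t(2) by blast
  moreover have "cspan (insert t S) \<subseteq> T"
    using assms(1,3) t(1) cvs.span_minimal[of "insert t S" T] by blast
  then have "cdim (cspan (insert t S)) \<le> cdim T"
    using assms(3,4) by (rule cdim_subset)
  ultimately show ?thesis
    by simp
qed

lemma clinear_kernel_nontrivial:
  assumes A: "clinear A" and S: "cvs.subspace S" "cfinite_dim S"
    and T: "cvs.subspace T" "cfinite_dim T" and "A ` S \<subseteq> T" and "cdim T < cdim S"
  obtains x where "x \<in> S" "x \<noteq> 0" "A x = 0"
proof (rule ccontr)
  assume "\<not> thesis"
  then have inj: "inj_on A S"
    using that module_hom.inj_on_iff_eq_0[OF A S(1)] by blast
  obtain B where B: "finite B" "\<not> cdependent B" "cspan B = S" "card B = cdim S"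
    using cfinite_dim_basis[OF S] by blast
  have "B \<subseteq> S"
    using B(3) cvs.span_superset[of B] by blast
  have "\<not> cdependent (A ` B)"
    using module_hom.independent_injective_image[OF A B(2)] inj B(3) by simp
  moreover have "card (A ` B) = card B"
    using card_image inj_on_subset[OF inj \<open>B \<subseteq> S\<close>] by blast
  moreover obtain C where C: "finite C" "cspan C = T" "card C = cdim T"
    using cfinite_dim_basis[OF T] by metis
  moreover have "A ` B \<subseteq> cspan C"
    using \<open>A ` S \<subseteq> T\<close> \<open>B \<subseteq> S\<close> C(2) by blast
  ultimately have "card B \<le> cdim T"
    using cvs.dim_le_card[of "A ` B" C] cvs.dim_eq_card_independent by fastforce
  then show False
    using \<open>cdim T < cdim S\<close> B(4) by simp
qed

lemma finite_rank_iff_cfinite_dim: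
  assumes "clinear A"
  shows "finite_rank A \<longleftrightarrow> cfinite_dim (range A)"
  using cfinite_dim_basis[OF clinear_subspace_range[OF assms]]
  unfolding finite_rank_def cfinite_dim_def by (metis order_refl)

lemma has_rank_iff:
  assumes "clinear A"
  shows "has_rank A k \<longleftrightarrow> finite_rank A \<and> crank A = k"
proof
  assume "has_rank A k"
  then show "finite_rank A \<and> crank A = k"
    unfolding has_rank_def finite_rank_def by (metis cvs.dim_span_eq_card_independent)
next
  assume "finite_rank A \<and> crank A = k"
  then show "has_rank A k"
    using cfinite_dim_basis[OF clinear_subspace_range[OF assms]]
    unfolding has_rank_def finite_rank_iff_cfinite_dim[OF assms] by metis
qed

lemma Pk_iff: "P \<in> Pk k \<longleftrightarrow> is_projection P \<and> finite_rank P \<and> crank P = k"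
  by (auto simp: Pk_def has_rank_iff projection_clinear)

lemma Pk_subspace_range: "P \<in> Pk k \<Longrightarrow> cvs.subspace (range P)"
  by (simp add: Pk_iff clinear_subspace_range projection_clinear)

lemma Pk_cfinite_dim_range: "P \<in> Pk k \<Longrightarrow> cfinite_dim (range P)"
  by (auto simp: Pk_iff finite_rank_iff_cfinite_dim projection_clinear)

lemma Pk_range_subset_imp_eq:
  assumes "P \<in> Pk k" "Q \<in> Pk k" "range P \<subseteq> range Q"
  shows "range P = range Q"
proof (rule ccontr)
  assume "range P \<noteq> range Q"
  then have "crank P < crank Q"
    using assms by (intro cdim_psubset) (auto simp: Pk_subspace_range Pk_cfinite_dim_range)
  then show False
    using assms by (simp add: Pk_iff)
qed

lemma Pf_subset_Fs: "Pf \<subseteq> Fs"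
  by (auto simp: Pf_def Fs_def is_projection_def)

lemma Fs_bounded: "A \<in> Fs \<Longrightarrow> \<exists>K>0. \<forall>x. norm (A x) \<le> K * norm x"
proof -
  assume "A \<in> Fs"
  then obtain K where "\<forall>x. norm (A x) \<le> norm x * K"
    by (auto simp: Fs_def bounded_clinear_def)
  then have "\<forall>x. norm (A x) \<le> max K 1 * norm x"
    by (metis max.cobounded1 mult.commute mult_left_mono norm_ge_zero order_trans)
  then show ?thesis
    by (intro exI[of _ "max K 1"]) auto
qed

lemma Fs_add:
  assumes "A \<in> Fs" "B \<in> Fs"
  shows "(\<lambda>x. A x + B x) \<in> Fs"
proof -
  obtain KA KB where K: "\<forall>x. norm (A x) \<le> KA * norm x" "\<forall>x. norm (B x) \<le> KB * norm x"
    using Fs_bounded assms by metis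
  have "norm (A x + B x) \<le> norm x * (KA + KB)" for x
    using norm_triangle_ineq[of "A x" "B x"] K by (simp add: algebra_simps add_mono order_trans)
  moreover have lin: "clinear (\<lambda>x. A x + B x)"
    using assms by (simp add: Fs_def bounded_clinear_def clinear_iff scaleC_add_right)
  moreover have "selfadjoint (\<lambda>x. A x + B x)"
    using assms by (simp add: Fs_def selfadjoint_def cinner_add_left cinner_add_right)
  moreover obtain FA FB where "finite FA" "cspan FA = range A" "finite FB" "cspan FB = range B"
    using assms by (auto simp: Fs_def finite_rank_def)
  then have "A x + B x \<in> cspan (FA \<union> FB)" for x
    by (metis cvs.span_add cvs.span_mono le_sup_iff order_refl rangeI subsetD)
  then have "cfinite_dim (range (\<lambda>x. A x + B x))"
    unfolding cfinite_dim_def using \<open>finite FA\<close> \<open>finite FB\<close> by blast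
  ultimately show ?thesis
    by (auto simp: Fs_def bounded_clinear_def clinear_iff finite_rank_iff_cfinite_dim[OF lin])
qed

lemma Fs_scaleR:
  assumes "A \<in> Fs"
  shows "(\<lambda>x. r *\<^sub>R A x) \<in> Fs"
proof -
  obtain K where "\<forall>x. norm (A x) \<le> K * norm x"
    using Fs_bounded assms by metis
  then have "norm (r *\<^sub>R A x) \<le> norm x * (\<bar>r\<bar> * K)" for x
    using mult_left_mono[of "norm (A x)" "K * norm x" "\<bar>r\<bar>"] by (simp add: mult_ac)
  moreover have lin: "clinear (\<lambda>x. r *\<^sub>R A x)"
    using assms by (simp add: Fs_def bounded_clinear_def clinear_iff scaleR_scaleC
        scaleC_add_right scaleC_scaleC mult.commute)
  moreover have "selfadjoint (\<lambda>x. r *\<^sub>R A x)"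
    using assms by (simp add: Fs_def selfadjoint_def cinner_scaleR_left cinner_scaleR_right)
  moreover obtain F where "finite F" "cspan F = range A"
    using assms by (auto simp: Fs_def finite_rank_def)
  then have "cfinite_dim (range (\<lambda>x. r *\<^sub>R A x))"
    unfolding cfinite_dim_def scaleR_scaleC by (auto intro: cvs.span_scale)
  ultimately show ?thesis
    by (auto simp: Fs_def bounded_clinear_def clinear_iff finite_rank_iff_cfinite_dim[OF lin])
qed

lemma Fs_linear_mapD:
  assumes "Fs_linear_map \<phi>" "A \<in> Fs" "B \<in> Fs"
  shows "\<phi> A \<in> Fs"
    and "\<phi> (\<lambda>x. A x + r *\<^sub>R B x) = (\<lambda>y. \<phi> A y + r *\<^sub>R \<phi> B y)"
  using assms Fs_scaleR[OF assms(3)] unfolding Fs_linear_map_def by auto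

lemma ketbra_unit_in_Pf:
  assumes "cinner u u = 1"
  shows "ketbra u \<in> Pf"
proof -
  have "is_projection (ketbra u)"
    using assms
    by (simp add: is_projection_iff clinear_ketbra selfadjoint_ketbra ketbra_def cinner_scaleC_right)
  moreover have "cfinite_dim (range (ketbra u))"
    using range_ketbra_subset unfolding cfinite_dim_def by blast
  ultimately show ?thesis
    by (simp add: Pf_def finite_rank_iff_cfinite_dim[OF clinear_ketbra])
qed

lemma ketbra_scaleR: "ketbra (r *\<^sub>R v) = (\<lambda>x. (r * r) *\<^sub>R ketbra v x)"
  by (simp add: fun_eq_iff ketbra_def scaleR_scaleC cinner_scaleC_left scaleC_scaleC mult_ac)

lemma ketbra_in_Fs:
  assumes "v \<noteq> 0"
  shows "ketbra v \<in> Fs"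
proof -
  have "ketbra v = ketbra (norm v *\<^sub>R (v /\<^sub>R norm v))"
    using assms by simp
  then have "ketbra v = (\<lambda>x. (norm v * norm v) *\<^sub>R ketbra (v /\<^sub>R norm v) x)"
    by (simp only: ketbra_scaleR)
  then show ?thesis
    using Fs_scaleR ketbra_unit_in_Pf[OF cinner_normalize_self[OF assms]] Pf_subset_Fs by auto
qed

lemma projection_add_ketbra_in_Pk:
  assumes R: "is_projection R" "finite_rank R" and e: "cinner e e = 1" "R e = 0"
  shows "(\<lambda>x. R x + ketbra e x) \<in> Pk (Suc (crank R))"
proof -
  have lin: "clinear R"
    using R(1) by (rule projection_clinear)
  have "e \<notin> range R"
    using R(1) e projection_fixes_range by fastforce
  then have "cdim (cspan (insert e (range R))) = Suc (crank R)"
    using R(2) by (intro cdim_span_insert clinear_subspace_range lin)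
        (simp_all add: finite_rank_iff_cfinite_dim[OF lin])
  moreover have "(\<lambda>x. R x + ketbra e x) \<in> Fs"
    using R e Pf_subset_Fs ketbra_unit_in_Pf by (intro Fs_add) (auto simp: Pf_def)
  ultimately show ?thesis
    using projection_add_ketbra[OF R(1) e] by (simp add: Pk_iff Fs_def)
qed

section \<open>Local constancy of the rank\<close>

lemma rank_eq_if_close:
  assumes "P \<in> Pf" "Q \<in> Pf" and close: "\<And>x. x \<noteq> 0 \<Longrightarrow> norm (P x - Q x) < norm x"
  shows "crank P = crank Q"
proof -
  have "crank P \<le> crank Q"
    if P: "P \<in> Pf" and Q: "Q \<in> Pf" and close: "\<And>x. x \<noteq> 0 \<Longrightarrow> norm (P x - Q x) < norm x"
    for P Q :: "'a \<Rightarrow> 'a"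
  proof (rule ccontr)
    assume "\<not> crank P \<le> crank Q"
    have lin: "clinear P" "clinear Q"
      using P Q by (auto simp: Pf_def projection_clinear)
    moreover have "cfinite_dim (range P)" "cfinite_dim (range Q)"
      using P Q lin by (auto simp: Pf_def finite_rank_iff_cfinite_dim)
    ultimately obtain x where x: "x \<in> range P" "x \<noteq> 0" "Q x = 0"
      using clinear_kernel_nontrivial[of Q "range P" "range Q"] \<open>\<not> crank P \<le> crank Q\<close>
      by (metis clinear_subspace_range image_subsetI not_le_imp_less rangeI)
    then have "P x = x"
      using P projection_fixes_range by (auto simp: Pf_def)
    then show False
      using close[OF x(2)] x(3) by simp
  qed
  from this[OF assms] this[OF assms(2,1)] show ?thesis
    using close by (simp add: norm_minus_commute)
qed

lemma rank_constant_on_path: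
  fixes Q :: "real \<Rightarrow> 'a::complex_inner \<Rightarrow> 'a"
  assumes "\<And>t. t \<in> {0..1} \<Longrightarrow> Q t \<in> Pf"
    and "\<And>s. s \<in> {0..1} \<Longrightarrow>
      \<forall>\<^sub>F t in at s within {0..1}. \<forall>x. x \<noteq> 0 \<longrightarrow> norm (Q t x - Q s x) < norm x"
  shows "crank (Q 0) = crank (Q 1)"
proof (rule connected_local_const[of "{0..1}" 0 1 "\<lambda>t. crank (Q t)"])
  show "\<forall>s\<in>{0..1}. \<forall>\<^sub>F t in at s within {0..1}. crank (Q s) = crank (Q t)"
  proof
    fix s :: real
    assume s: "s \<in> {0..1}"
    have "\<forall>\<^sub>F t in at s within {0..1}. t \<in> {0..1}"
      by (simp add: eventually_at_filter)
    with assms(2)[OF s] show "\<forall>\<^sub>F t in at s within {0..1}. crank (Q s) = crank (Q t)"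
      by eventually_elim (metis assms(1) s rank_eq_if_close)
  qed
qed auto

lemma eventually_scaleR_diff_small:
  assumes "A \<in> Fs" "(c \<longlongrightarrow> c s) F" "0 < \<epsilon>"
  shows "\<forall>\<^sub>F t in F. \<forall>x. norm ((c t - c s) *\<^sub>R A x) \<le> \<epsilon> * norm x"
proof -
  obtain K where K: "K > 0" "\<forall>x. norm (A x) \<le> K * norm x"
    using Fs_bounded[OF assms(1)] by blast
  have "\<forall>\<^sub>F t in F. dist (c t) (c s) < \<epsilon> / K"
    using assms(2,3) K(1) by (simp add: tendsto_iff)
  then show ?thesis
  proof eventually_elim
    case (elim t)
    have "\<bar>c t - c s\<bar> * norm (A x) \<le> (\<epsilon> / K) * (K * norm x)" for x
      using elim K by (intro mult_mono) (auto simp: dist_real_def)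
    then show ?case
      using K(1) by simp
  qed
qed

lemma rank_constant_on_affine_path:
  fixes A0 A1 A2 A3 :: "'a::complex_inner \<Rightarrow> 'a" and c1 c2 c3 :: "real \<Rightarrow> real"
  defines "Q \<equiv> \<lambda>t x. A0 x + c1 t *\<^sub>R A1 x + c2 t *\<^sub>R A2 x + c3 t *\<^sub>R A3 x"
  assumes "A1 \<in> Fs" "A2 \<in> Fs" "A3 \<in> Fs"
    and "continuous_on {0..1} c1" "continuous_on {0..1} c2" "continuous_on {0..1} c3"
    and "\<And>t. t \<in> {0..1} \<Longrightarrow> Q t \<in> Pf"
  shows "crank (Q 0) = crank (Q 1)"
proof (rule rank_constant_on_path)
  fix s :: real
  assume "s \<in> {0..1}"
  then have small: "\<forall>\<^sub>F t in at s within {0..1}. \<forall>x. norm ((c t - c s) *\<^sub>R A x) \<le> 1/4 * norm x"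
    if "A \<in> Fs" "continuous_on {0..1} c" for A :: "'a \<Rightarrow> 'a" and c :: "real \<Rightarrow> real"
    using that by (intro eventually_scaleR_diff_small) (auto simp: continuous_on_def)
  have "\<forall>\<^sub>F t in at s within {0..1}. \<forall>x.
      norm ((c1 t - c1 s) *\<^sub>R A1 x) \<le> 1/4 * norm x \<and>
      norm ((c2 t - c2 s) *\<^sub>R A2 x) \<le> 1/4 * norm x \<and>
      norm ((c3 t - c3 s) *\<^sub>R A3 x) \<le> 1/4 * norm x"
    unfolding all_conj_distrib using assms(2-7) by (intro eventually_conj small)
  then show "\<forall>\<^sub>F t in at s within {0..1}. \<forall>x. x \<noteq> 0 \<longrightarrow> norm (Q t x - Q s x) < norm x"
  proof eventually_elim
    case (elim t)
    show ?case
    proof (intro allI impI)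
      fix x :: 'a
      assume "x \<noteq> 0"
      have "Q t x - Q s x =
          (c1 t - c1 s) *\<^sub>R A1 x + (c2 t - c2 s) *\<^sub>R A2 x + (c3 t - c3 s) *\<^sub>R A3 x"
        by (simp add: Q_def algebra_simps)
      also have "norm \<dots> \<le>
          norm ((c1 t - c1 s) *\<^sub>R A1 x) + norm ((c2 t - c2 s) *\<^sub>R A2 x)
          + norm ((c3 t - c3 s) *\<^sub>R A3 x)"
        by (meson add_mono norm_triangle_ineq order_trans order_refl)
      also have "\<dots> \<le> 1/4 * norm x + 1/4 * norm x + 1/4 * norm x"
        using elim by (intro add_mono) auto
      also have "\<dots> < norm x"
        using \<open>x \<noteq> 0\<close> by simp
      finally show "norm (Q t x - Q s x) < norm x" .
    qed
  qed
qed (use assms(8) in auto)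

section \<open>Rotating one direction of a projection\<close>

lemma segment_avoids_zero:
  assumes "w \<noteq> 0" "e \<notin> cspan {w}"
  shows "(1 - t) *\<^sub>R w + t *\<^sub>R e \<noteq> 0"
proof
  assume zero: "(1 - t) *\<^sub>R w + t *\<^sub>R e = 0"
  show False
  proof (cases "t = 0")
    case True
    then show False
      using zero assms(1) by simp
  next
    case False
    have "t *\<^sub>R e = - ((1 - t) *\<^sub>R w)"
      using zero by (simp add: eq_neg_iff_add_eq_0 add.commute)
    then have "t *\<^sub>R e \<in> cspan {w}"
      by (simp add: scaleR_scaleC cvs.span_neg cvs.span_scale cvs.span_base)
    then have "(1 / t) *\<^sub>R (t *\<^sub>R e) \<in> cspan {w}"
      unfolding scaleR_scaleC by (rule cvs.span_scale)
    then show False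
      using assms(2) False by simp
  qed
qed

text \<open>The cross term is expressed through \<open>|w + e\<rangle>\<langle>w + e|\<close>, so that only operators
  of \<open>F\<^sub>s\<close> occur.\<close>

lemma ketbra_real_combination:
  fixes a b :: real
  shows "ketbra (a *\<^sub>R w + b *\<^sub>R e) x =
    (a * a - a * b) *\<^sub>R ketbra w x + (b * b - a * b) *\<^sub>R ketbra e x + (a * b) *\<^sub>R ketbra (w + e) x"
proof (rule cinner_eq_imp_eq)
  fix z
  show "cinner z (ketbra (a *\<^sub>R w + b *\<^sub>R e) x) = cinner z ((a * a - a * b) *\<^sub>R ketbra w x
      + (b * b - a * b) *\<^sub>R ketbra e x + (a * b) *\<^sub>R ketbra (w + e) x)"
    by (simp add: ketbra_def cinner_add_left cinner_add_right cinner_scaleR_left cinner_scaleR_right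
        cinner_scaleC_right algebra_simps)
qed

lemma normalized_segment:
  assumes w: "cinner w w = 1" and e: "cinner e e = 1" and independent: "e \<notin> cspan {w}"
  obtains a b :: "real \<Rightarrow> real"
  where "continuous_on {0..1} a" "continuous_on {0..1} b"
    "\<And>t. cinner (a t *\<^sub>R w + b t *\<^sub>R e) (a t *\<^sub>R w + b t *\<^sub>R e) = 1"
    "a 0 = 1" "b 0 = 0" "a 1 = 0" "b 1 = 1"
proof -
  define v where "v t = (1 - t) *\<^sub>R w + t *\<^sub>R e" for t :: real
  have "w \<noteq> 0"
    using w by auto
  then have v_nonzero: "v t \<noteq> 0" for t
    using segment_avoids_zero[OF _ independent] by (simp add: v_def)
  have "norm w = 1" "norm e = 1"
    using w e by (simp_all add: norm_eq_one_iff_cinner)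
  show ?thesis
  proof (rule that[of "\<lambda>t. (1 - t) / norm (v t)" "\<lambda>t. t / norm (v t)"])
    have "continuous_on {0..1} (\<lambda>t. norm (v t))"
      unfolding v_def by (intro continuous_intros)
    then show "continuous_on {0..1} (\<lambda>t. (1 - t) / norm (v t))"
      and "continuous_on {0..1} (\<lambda>t. t / norm (v t))"
      using v_nonzero by (auto intro!: continuous_intros)
    fix t :: real
    have "((1 - t) / norm (v t)) *\<^sub>R w + (t / norm (v t)) *\<^sub>R e = v t /\<^sub>R norm (v t)"
      by (simp add: v_def scaleR_add_right divide_inverse_commute)
    then show "cinner (((1 - t) / norm (v t)) *\<^sub>R w + (t / norm (v t)) *\<^sub>R e)
        (((1 - t) / norm (v t)) *\<^sub>R w + (t / norm (v t)) *\<^sub>R e) = 1"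
      using cinner_normalize_self[OF v_nonzero] by simp
  qed (simp_all add: v_def \<open>norm w = 1\<close> \<open>norm e = 1\<close>)
qed

lemma rank_image_exchange:
  assumes \<phi>: "Fs_linear_map \<phi>" "\<phi> ` Pk (Suc (crank R)) \<subseteq> Pf"
    and R: "is_projection R" "finite_rank R"
    and w: "cinner w w = 1" "R w = 0" and e: "cinner e e = 1" "R e = 0"
    and independent: "e \<notin> cspan {w}"
  shows "crank (\<phi> (\<lambda>x. R x + ketbra w x)) = crank (\<phi> (\<lambda>x. R x + ketbra e x))"
proof (rule normalized_segment[OF w(1) e(1) independent])
  fix a b :: "real \<Rightarrow> real"
  assume ab: "continuous_on {0..1} a" "continuous_on {0..1} b"
    "\<And>t. cinner (a t *\<^sub>R w + b t *\<^sub>R e) (a t *\<^sub>R w + b t *\<^sub>R e) = 1"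
    "a 0 = 1" "b 0 = 0" "a 1 = 0" "b 1 = 1"
  define u where "u t = a t *\<^sub>R w + b t *\<^sub>R e" for t
  define c1 c2 c3 where "c1 t = a t * a t - a t * b t" and "c2 t = b t * b t - a t * b t"
    and "c3 t = a t * b t" for t
  have "R (u t) = 0" for t
    using projection_clinear[OF R(1)] w(2) e(2) by (simp add: u_def module_hom.add clinear_scaleR)
  then have "(\<lambda>x. R x + ketbra (u t) x) \<in> Pk (Suc (crank R))" for t
    using R ab(3) by (intro projection_add_ketbra_in_Pk) (simp_all add: u_def)
  then have in_Pf: "\<phi> (\<lambda>x. R x + ketbra (u t) x) \<in> Pf" for t
    using \<phi>(2) by blast
  have "w \<noteq> 0"
    using w(1) by auto
  then have "w + e \<noteq> 0"
    using segment_avoids_zero[OF _ independent, of "1/2"] by (auto simp flip: scaleR_add_right)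
  then have Fs: "R \<in> Fs" "ketbra w \<in> Fs" "ketbra e \<in> Fs" "ketbra (w + e) \<in> Fs"
    using R w e Pf_subset_Fs ketbra_unit_in_Pf ketbra_in_Fs by (auto simp: Pf_def)
  have \<phi>_path: "\<phi> (\<lambda>x. R x + ketbra (u t) x) = (\<lambda>y. \<phi> R y
      + c1 t *\<^sub>R \<phi> (ketbra w) y + c2 t *\<^sub>R \<phi> (ketbra e) y + c3 t *\<^sub>R \<phi> (ketbra (w + e)) y)" for t
  proof -
    have "(\<lambda>x. R x + ketbra (u t) x) = (\<lambda>x. R x
        + c1 t *\<^sub>R ketbra w x + c2 t *\<^sub>R ketbra e x + c3 t *\<^sub>R ketbra (w + e) x)"
      by (simp add: fun_eq_iff u_def ketbra_real_combination c1_def c2_def c3_def add.assoc)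
    then show ?thesis
      using Fs by (simp add: Fs_linear_mapD[OF \<phi>(1)] Fs_add Fs_scaleR)
  qed
  have "continuous_on {0..1} c1" "continuous_on {0..1} c2" "continuous_on {0..1} c3"
    unfolding c1_def c2_def c3_def using ab(1,2) by (auto intro!: continuous_intros)
  then have "crank (\<phi> (\<lambda>x. R x + ketbra (u 0) x)) = crank (\<phi> (\<lambda>x. R x + ketbra (u 1) x))"
    unfolding \<phi>_path using Fs in_Pf
    by (intro rank_constant_on_affine_path[of _ _ _ c1 c2 c3])
      (auto simp: Fs_linear_mapD[OF \<phi>(1)] \<phi>_path)
  then show ?thesis
    using ab(4-7) by (simp add: u_def)
qed

section \<open>Joining two projections of equal rank\<close>

lemma exists_unit_orthogonal_to_range_inter:
  assumes P: "is_projection P" and Q: "is_projection Q" and u: "u \<in> range P" "u \<notin> range Q"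
  obtains w where "cinner w w = 1" "P w = w" "\<And>z. z \<in> range P \<inter> range Q \<Longrightarrow> cinner w z = 0"
proof -
  define y where "y = u - P (Q u)"
  have "P u = u"
    using u(1) P projection_fixes_range by blast
  then have "P y = y"
    using projection_clinear[OF P] by (simp add: y_def module_hom.diff P)
  have "y \<noteq> 0"
  proof
    assume "y = 0"
    then have "u = P (Q u)"
      by (simp add: y_def)
    then have "norm u \<le> norm (Q u)"
      using norm_projection_le[OF P, of "Q u"] by simp
    then have "(norm u)\<^sup>2 \<le> (norm (Q u))\<^sup>2"
      by (simp add: power_mono)
    moreover have "(norm u)\<^sup>2 = (norm (Q u))\<^sup>2 + (norm (u - Q u))\<^sup>2"
      by (rule projection_pythagoras[OF Q])
    ultimately have "(norm (u - Q u))\<^sup>2 \<le> 0"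
      by linarith
    then have "Q u = u"
      by simp
    with u(2) show False
      by (metis rangeI)
  qed
  have "cinner y z = 0" if "z \<in> range P \<inter> range Q" for z
  proof -
    have "P z = z" "Q z = z"
      using that P Q projection_fixes_range by blast+
    then have "cinner (P (Q u)) z = cinner u z"
      using projection_cinner[OF P, of "Q u" z] projection_cinner[OF Q, of u z] by simp
    then show ?thesis
      by (simp add: y_def cinner_diff_left)
  qed
  then show ?thesis
  proof (intro that)
    show "cinner (y /\<^sub>R norm y) (y /\<^sub>R norm y) = 1"
      using \<open>y \<noteq> 0\<close> by (rule cinner_normalize_self)
    show "P (y /\<^sub>R norm y) = y /\<^sub>R norm y"
      using projection_clinear[OF P] \<open>P y = y\<close> by (simp add: clinear_scaleR)
  qed (simp add: cinner_scaleR_left)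
qed

lemma exists_unit_in_kernel_spanning:
  assumes R: "is_projection R" and v: "v \<notin> range R"
  obtains e where "cinner e e = 1" "R e = 0" "v \<in> cspan (insert e (range R))"
proof -
  define z where "z = v - R v"
  have "z \<noteq> 0"
  proof
    assume "z = 0"
    then have "v = R v"
      by (simp add: z_def)
    with v show False
      by (metis rangeI)
  qed
  have "R z = 0"
    using projection_clinear[OF R] by (simp add: z_def module_hom.diff R)
  have "v = R v + norm z *\<^sub>R (z /\<^sub>R norm z)"
    using \<open>z \<noteq> 0\<close> by (simp add: z_def)
  also have "\<dots> \<in> cspan (insert (z /\<^sub>R norm z) (range R))"
    unfolding scaleR_scaleC by (intro cvs.span_add cvs.span_scale cvs.span_base) auto
  finally show ?thesis
  proof (intro that)
    show "cinner (z /\<^sub>R norm z) (z /\<^sub>R norm z) = 1"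
      using \<open>z \<noteq> 0\<close> by (rule cinner_normalize_self)
    show "R (z /\<^sub>R norm z) = 0"
      using projection_clinear[OF R] \<open>R z = 0\<close> by (simp add: clinear_scaleR)
  qed
qed

lemma Pk_split_off_ketbra:
  assumes P: "P \<in> Pk k" and w: "cinner w w = 1" "P w = w"
  obtains R where "is_projection R" "finite_rank R" "k = Suc (crank R)" "R w = 0"
    "range R \<subseteq> range P" "P = (\<lambda>x. R x + ketbra w x)"
    "\<And>z. z \<in> range P \<Longrightarrow> cinner w z = 0 \<Longrightarrow> z \<in> range R"
proof -
  have projP: "is_projection P"
    using P by (simp add: Pk_iff)
  define R where "R = (\<lambda>x. P x - ketbra w x)"
  have R: "is_projection R" "R w = 0" "range R \<subseteq> range P"
    unfolding R_def using projection_minus_ketbra[OF projP w] by auto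
  have "finite_rank R"
    using R(1,3) cfinite_dim_subset[OF Pk_cfinite_dim_range[OF P]]
    by (simp add: finite_rank_iff_cfinite_dim projection_clinear)
  have "P = (\<lambda>x. R x + ketbra w x)"
    by (simp add: R_def fun_eq_iff)
  then have "P \<in> Pk (Suc (crank R))"
    using projection_add_ketbra_in_Pk[OF R(1) \<open>finite_rank R\<close> w(1) R(2)] by simp
  then have "k = Suc (crank R)"
    using P by (simp add: Pk_iff)
  moreover have "z \<in> range R" if "z \<in> range P" "cinner w z = 0" for z
  proof -
    have "R z = z"
      using that projP projection_fixes_range by (auto simp: R_def ketbra_def)
    then show ?thesis
      by (metis rangeI)
  qed
  ultimately show ?thesis
    using that[of R] R \<open>finite_rank R\<close> \<open>P = _\<close> by blast
qed

lemma exists_Pk_closer: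
  assumes \<phi>: "Fs_linear_map \<phi>" "\<phi> ` Pk k \<subseteq> Pf"
    and P: "P \<in> Pk k" and Q: "Q \<in> Pk k" and "range P \<noteq> range Q"
  obtains P' where "P' \<in> Pk k" "crank (\<phi> P') = crank (\<phi> P)"
    "cdim (range P \<inter> range Q) < cdim (range P' \<inter> range Q)"
proof -
  have projP: "is_projection P" and projQ: "is_projection Q"
    using P Q by (auto simp: Pk_iff)
  obtain u where u: "u \<in> range P" "u \<notin> range Q"
    using Pk_range_subset_imp_eq[OF P Q] \<open>range P \<noteq> range Q\<close> by blast
  obtain v where v: "v \<in> range Q" "v \<notin> range P"
    using Pk_range_subset_imp_eq[OF Q P] \<open>range P \<noteq> range Q\<close> by blast
  obtain w where w: "cinner w w = 1" "P w = w" "\<And>z. z \<in> range P \<inter> range Q \<Longrightarrow> cinner w z = 0"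
    using exists_unit_orthogonal_to_range_inter[OF projP projQ u] by blast
  obtain R where R: "is_projection R" "finite_rank R" "k = Suc (crank R)" "R w = 0"
    "range R \<subseteq> range P" "P = (\<lambda>x. R x + ketbra w x)"
    "\<And>z. z \<in> range P \<Longrightarrow> cinner w z = 0 \<Longrightarrow> z \<in> range R"
    using Pk_split_off_ketbra[OF P w(1,2)] by blast
  have inter_sub: "range P \<inter> range Q \<subseteq> range R"
    using R(7) w(3) by blast
  obtain e where e: "cinner e e = 1" "R e = 0" "v \<in> cspan (insert e (range R))"
    using exists_unit_in_kernel_spanning[OF R(1)] v(2) R(5) by blast
  have "e \<notin> range P"
    using span_insert_notin_subspace[OF Pk_subspace_range[OF P] R(5) e(3) v(2)] .
  moreover have "cspan {w} \<subseteq> range P"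
    using w(2) Pk_subspace_range[OF P] rangeI[of P w] by (intro cvs.span_minimal) auto
  ultimately have "e \<notin> cspan {w}"
    by blast
  define P' where "P' = (\<lambda>x. R x + ketbra e x)"
  have P': "P' \<in> Pk k"
    using projection_add_ketbra_in_Pk[OF R(1,2) e(1,2)] by (simp add: P'_def R(3))
  have rank_eq: "crank (\<phi> P') = crank (\<phi> P)"
    using rank_image_exchange[OF \<phi>(1) \<phi>(2)[unfolded R(3)] R(1,2) w(1) R(4) e(1,2)
        \<open>e \<notin> cspan {w}\<close>]
    by (simp add: P'_def flip: R(6))
  have "range P \<inter> range Q \<subset> range P' \<inter> range Q"
  proof -
    have "range P' = cspan (insert e (range R))"
      unfolding P'_def by (rule projection_add_ketbra(2)[OF R(1) e(1,2)])
    then have "range R \<subseteq> range P'" and "v \<in> range P'"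
      using order_trans[OF subset_insertI[of "range R" e] cvs.span_superset] e(3) by simp_all
    then show ?thesis
      using inter_sub v unfolding psubset_eq by blast
  qed
  then have "cdim (range P \<inter> range Q) < cdim (range P' \<inter> range Q)"
    using Pk_subspace_range[OF P] Pk_subspace_range[OF P'] Pk_subspace_range[OF Q]
      cfinite_dim_subset[OF Pk_cfinite_dim_range[OF Q]]
    by (intro cdim_psubset cvs.subspace_inter) auto
  then show ?thesis
    using that P' rank_eq by blast
qed

lemma rank_image_constant_on_Pk:
  assumes \<phi>: "Fs_linear_map \<phi>" "\<phi> ` Pk k \<subseteq> Pf"
  shows "P \<in> Pk k \<Longrightarrow> Q \<in> Pk k \<Longrightarrow> crank (\<phi> P) = crank (\<phi> Q)"
proof (induction "k - cdim (range P \<inter> range Q)" arbitrary: P rule: less_induct)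
  case less
  show ?case
  proof (cases "range P = range Q")
    case True
    then have "P = Q"
      using less.prems by (auto simp: Pk_iff intro: projection_eq_if_range_eq)
    then show ?thesis
      by simp
  next
    case False
    then obtain P' where P': "P' \<in> Pk k" "crank (\<phi> P') = crank (\<phi> P)"
      "cdim (range P \<inter> range Q) < cdim (range P' \<inter> range Q)"
      using exists_Pk_closer[OF \<phi> less.prems] by blast
    have "cdim (range P' \<inter> range Q) \<le> k"
      using cdim_subset[OF _ Pk_subspace_range Pk_cfinite_dim_range, OF _ less.prems(2,2)]
        less.prems(2) by (simp add: Pk_iff)
    then show ?thesis
      using less.hyps[OF _ P'(1) less.prems(2)] P'(2,3) by simp
  qed
qed

theorem proposition4p1:
  fixes \<phi> :: "('a::chilbert_space \<Rightarrow> 'a) \<Rightarrow> ('b::chilbert_space \<Rightarrow> 'b)"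
    and k :: nat
  assumes "0 < k"
    and "dim_greater TYPE('a) k"
    and "Fs_linear_map \<phi>"
    and "\<phi> ` Pk k \<subseteq> Pf"
  shows "\<exists>m::nat. dim_at_least TYPE('b) m \<and> \<phi> ` (Pk k :: ('a \<Rightarrow> 'a) set) \<subseteq> Pk m"
proof (cases "Pk k = ({} :: ('a \<Rightarrow> 'a) set)")
  case True
  have "dim_at_least TYPE('b) 0"
    unfolding dim_at_least_def using cvs.independent_empty by (intro exI[of _ "{}"]) auto
  with True show ?thesis
    by blast
next
  case False
  then obtain P :: "'a \<Rightarrow> 'a" where P: "P \<in> Pk k"
    by blast
  have image_Pk: "\<phi> Q \<in> Pk (crank (\<phi> P))" if "Q \<in> Pk k" for Q
  proof -
    have "\<phi> Q \<in> Pf"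
      using assms(4) that by blast
    then show ?thesis
      using rank_image_constant_on_Pk[OF assms(3,4) that P] by (simp add: Pk_iff Pf_def)
  qed
  moreover have "dim_at_least TYPE('b) (crank (\<phi> P))"
    using image_Pk[OF P] unfolding Pk_def has_rank_def dim_at_least_def by blast
  ultimately show ?thesis
    by blast
qed

end
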